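(* Let $\mathbb O$ be a finite set of consecutive integers containing $0$, and let $\theta=0$. If $x(0)\in\mathbb O^n$ has no coordinate equal to $0$, then there exists a finite legal update sequence from $x(0)$ along which the system reaches, in finite time, either a consensus state $(z,\dots,z)$ with $z\neq 0$ or a non-consensus equilibrium.
   Context: Let $n\ge1$, $\mathcal V=\{1,\dots,n\}$, and let $W=(w_{ij})$ be an $n\times n$ row-stochastic matrix. For $x\in\mathbb O^n$, $i\in\mathcal V$, $z\in\mathbb O$, define $C^i_{\mathrm{social}}(z;x)=\sum_{j=1}^n w_{ij}|z-x_j|$ and $P_i(x)=\{z\in\mathbb O: C^i_{\mathrm{social}}(z;x)\le C^i_{\mathrm{social}}(x_i;x),\ |z-\theta|\le |x_i-\theta|\}$ (Pareto improvements between social cost and cognitive cost $|z-\theta|$). A legal update sequence from $x(0)$ is a finite sequence $(i_1,z_1),\dots,(i_T,z_T)$ with $i_t\in\mathcal V$, generating $x(1),\dots,x(T)$ where $x(t)$ is obtained from $x(t-1)$ by setting coordinate $i_t$ to $z_t$, such that $z_t\in P_{i_t}(x(t-1))$ for every $t$. An equilibrium is a state $x^*$ with $P_i(x^* )=\{x_i^*\}$ for all $i\in\mathcal V$; it is non-consensus if not all coordinates are equal. *)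

theory Defs
  imports Complex_Main
begin

(* Agents are the elements of a finite type 'v (V = {1..n}, n = CARD('v) >= 1);
   states are functions 'v => int; opinion set Ops :: int set. *)

definition row_stochastic :: "('v::finite \<Rightarrow> 'v \<Rightarrow> real) \<Rightarrow> bool" where
  "row_stochastic W \<longleftrightarrow> (\<forall>i j. 0 \<le> W i j) \<and> (\<forall>i. (\<Sum>j\<in>UNIV. W i j) = 1)"

definition social_cost :: "('v::finite \<Rightarrow> 'v \<Rightarrow> real) \<Rightarrow> ('v \<Rightarrow> int) \<Rightarrow> 'v \<Rightarrow> int \<Rightarrow> real" where
  "social_cost W x i z = (\<Sum>j\<in>UNIV. W i j * real_of_int \<bar>z - x j\<bar>)"

definition pareto_set :: "int set \<Rightarrow> int \<Rightarrow> ('v::finite \<Rightarrow> 'v \<Rightarrow> real) \<Rightarrow> ('v \<Rightarrow> int) \<Rightarrow> 'v \<Rightarrow> int set" where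
  "pareto_set Ops \<theta> W x i = {z \<in> Ops. social_cost W x i z \<le> social_cost W x i (x i) \<and> \<bar>z - \<theta>\<bar> \<le> \<bar>x i - \<theta>\<bar>}"

fun legal_seq :: "int set \<Rightarrow> int \<Rightarrow> ('v::finite \<Rightarrow> 'v \<Rightarrow> real) \<Rightarrow> ('v \<Rightarrow> int) \<Rightarrow> ('v \<times> int) list \<Rightarrow> bool" where
  "legal_seq Ops \<theta> W x [] = True"
| "legal_seq Ops \<theta> W x ((i, z) # rest) = (z \<in> pareto_set Ops \<theta> W x i \<and> legal_seq Ops \<theta> W (x(i := z)) rest)"

fun run_seq :: "('v \<Rightarrow> int) \<Rightarrow> ('v \<times> int) list \<Rightarrow> ('v \<Rightarrow> int)" where
  "run_seq x [] = x"
| "run_seq x ((i, z) # rest) = run_seq (x(i := z)) rest"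

definition equilibrium :: "int set \<Rightarrow> int \<Rightarrow> ('v::finite \<Rightarrow> 'v \<Rightarrow> real) \<Rightarrow> ('v \<Rightarrow> int) \<Rightarrow> bool" where
  "equilibrium Ops \<theta> W x \<longleftrightarrow> (\<forall>i. pareto_set Ops \<theta> W x i = {x i})"

definition is_consensus :: "('v \<Rightarrow> int) \<Rightarrow> bool" where
  "is_consensus x \<longleftrightarrow> (\<exists>z. \<forall>i. x i = z)"

end

theory Submission
  imports Defs
begin

(* Social cost is convex in the opinion, so an agent with opinion x_i > 0 admits no Pareto
   improvement as soon as the step to x_i - 1 strictly increases its social cost (symmetrically
   for x_i < 0), and an agent at 0 never moves. In a first phase, positive agents step towards 0
   while this does not increase their social cost, an agent at 1 jumping to -1 instead of 0:
   since no opinion is 0, the cost changes from 1 to 0 and from 0 to -1 coincide, so the jump is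
   a Pareto improvement. In a second phase, negative agents step towards 0; such a move leaves
   the incentives of the positive agents unchanged, so these stay put. Both phases terminate
   because opinions move monotonically, and they end in an equilibrium. This equilibrium keeps a
   nonzero opinion: either a positive agent survives the first phase, or all opinions are
   negative afterwards and then no agent at -1 can step to 0. *)

lemma legal_seq_append:
  "legal_seq Ops \<theta> W x (s @ t) \<longleftrightarrow> legal_seq Ops \<theta> W x s \<and> legal_seq Ops \<theta> W (run_seq x s) t"
  by (induction s arbitrary: x) auto

lemma run_seq_append: "run_seq x (s @ t) = run_seq (run_seq x s) t"
  by (induction s arbitrary: x) auto

lemma legal_seq_descent:
  fixes f :: "('v::finite \<Rightarrow> int) \<Rightarrow> nat"
  assumes "P x"
    and step: "\<And>x. P x \<Longrightarrow> \<not> Q x \<Longrightarrow>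
      \<exists>i z. z \<in> pareto_set Ops \<theta> W x i \<and> P (x(i := z)) \<and> f (x(i := z)) < f x"
  shows "\<exists>seq. legal_seq Ops \<theta> W x seq \<and> P (run_seq x seq) \<and> Q (run_seq x seq)"
  using \<open>P x\<close>
proof (induction x rule: measure_induct_rule[of f])
  case (less x)
  show ?case
  proof (cases "Q x")
    case True
    with less.prems show ?thesis by (intro exI[of _ "[]"]) simp
  next
    case False
    with less.prems step obtain i z where
      z: "z \<in> pareto_set Ops \<theta> W x i" "P (x(i := z))" "f (x(i := z)) < f x"
      by blast
    with less.IH obtain seq where "legal_seq Ops \<theta> W (x(i := z)) seq"
      "P (run_seq (x(i := z)) seq)" "Q (run_seq (x(i := z)) seq)"
      by blast
    with z show ?thesis by (intro exI[of _ "(i, z) # seq"]) simp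
  qed
qed

lemma sum_fun_upd_less:
  fixes g :: "'a \<Rightarrow> nat" and x :: "'v::finite \<Rightarrow> 'a"
  assumes "g z < g (x i)"
  shows "(\<Sum>l\<in>UNIV. g ((x(i := z)) l)) < (\<Sum>l\<in>UNIV. g (x l))"
  by (rule sum_strict_mono_ex1) (use assms in auto)

lemma abs_interpolation:
  fixes z w v c :: "'a::linordered_idom"
  assumes "z \<le> w" "w \<le> v"
  shows "(v - z) * \<bar>w - c\<bar> \<le> (v - w) * \<bar>z - c\<bar> + (w - z) * \<bar>v - c\<bar>"
proof -
  have "(v - z) * \<bar>w - c\<bar> = \<bar>(v - w) * (z - c) + (w - z) * (v - c)\<bar>"
  proof -
    have "(v - w) * (z - c) + (w - z) * (v - c) = (v - z) * (w - c)"
      by (simp add: algebra_simps)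
    with assms show ?thesis by (simp add: abs_mult)
  qed
  also have "\<dots> \<le> \<bar>(v - w) * (z - c)\<bar> + \<bar>(w - z) * (v - c)\<bar>"
    by (rule abs_triangle_ineq)
  also have "\<dots> = (v - w) * \<bar>z - c\<bar> + (w - z) * \<bar>v - c\<bar>"
    using assms by (simp add: abs_mult)
  finally show ?thesis .
qed

lemma social_cost_convex:
  assumes "row_stochastic W" "z \<le> w" "w \<le> v"
  shows "of_int (v - z) * social_cost W x i w \<le>
         of_int (v - w) * social_cost W x i z + of_int (w - z) * social_cost W x i v"
proof -
  have "of_int (v - z) * (W i l * of_int \<bar>w - x l\<bar>) \<le>
        of_int (v - w) * (W i l * of_int \<bar>z - x l\<bar>) + of_int (w - z) * (W i l * of_int \<bar>v - x l\<bar>)"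
    for l
  proof -
    have "real_of_int ((v - z) * \<bar>w - x l\<bar>) \<le> of_int ((v - w) * \<bar>z - x l\<bar> + (w - z) * \<bar>v - x l\<bar>)"
      unfolding of_int_le_iff by (rule abs_interpolation[OF assms(2,3)])
    then have "W i l * of_int ((v - z) * \<bar>w - x l\<bar>) \<le>
               W i l * of_int ((v - w) * \<bar>z - x l\<bar> + (w - z) * \<bar>v - x l\<bar>)"
      using assms(1) by (intro mult_left_mono) (auto simp: row_stochastic_def)
    then show ?thesis by (simp add: algebra_simps)
  qed
  then show ?thesis
    unfolding social_cost_def sum_distrib_left sum.distrib[symmetric] by (rule sum_mono)
qed

lemma social_cost_le_max:
  assumes "row_stochastic W" "z \<le> w" "w \<le> v"
  shows "social_cost W x i w \<le> max (social_cost W x i z) (social_cost W x i v)"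
proof (cases "z = v")
  case True
  with assms show ?thesis by simp
next
  case False
  let ?m = "max (social_cost W x i z) (social_cost W x i v)"
  have "of_int (v - z) * social_cost W x i w \<le>
        of_int (v - w) * social_cost W x i z + of_int (w - z) * social_cost W x i v"
    by (rule social_cost_convex[OF assms])
  also have "\<dots> \<le> of_int (v - w) * ?m + of_int (w - z) * ?m"
    using assms by (intro add_mono mult_left_mono) auto
  also have "\<dots> = of_int (v - z) * ?m"
    by (simp add: algebra_simps)
  finally show ?thesis
    using False assms by simp
qed

lemma social_cost_step:
  "social_cost W x i (v - 1) - social_cost W x i v = (\<Sum>l\<in>UNIV. W i l * (if x l < v then -1 else 1))"
  unfolding social_cost_def sum_subtractf[symmetric]
  by (rule sum.cong) (auto simp: algebra_simps)

lemma social_cost_step_if_all_ge: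
  assumes "row_stochastic W" "\<forall>l. v \<le> x l"
  shows "social_cost W x i (v - 1) - social_cost W x i v = 1"
proof -
  have "\<not> x l < v" for l
    using assms(2) by (simp add: not_less)
  then have "social_cost W x i (v - 1) - social_cost W x i v = (\<Sum>l\<in>UNIV. W i l)"
    unfolding social_cost_step by simp
  with assms(1) show ?thesis by (simp add: row_stochastic_def)
qed

lemma social_cost_step_if_all_less:
  assumes "row_stochastic W" "\<forall>l. x l < v"
  shows "social_cost W x i (v - 1) - social_cost W x i v = -1"
proof -
  have "social_cost W x i (v - 1) - social_cost W x i v = - (\<Sum>l\<in>UNIV. W i l)"
    unfolding social_cost_step sum_negf[symmetric] using assms(2) by (intro sum.cong) auto
  with assms(1) show ?thesis by (simp add: row_stochastic_def)
qed

lemma social_cost_step_fun_upd: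
  assumes "x j < v" "c < v"
  shows "social_cost W (x(j := c)) i (v - 1) - social_cost W (x(j := c)) i v =
         social_cost W x i (v - 1) - social_cost W x i v"
  unfolding social_cost_step using assms by (intro sum.cong) auto

lemma social_cost_steps_across_zero:
  assumes "\<forall>l. x l \<noteq> 0"
  shows "social_cost W x i (-1) - social_cost W x i 0 = social_cost W x i 0 - social_cost W x i 1"
proof -
  have "social_cost W x i (-1) - social_cost W x i 0 = (\<Sum>l\<in>UNIV. W i l * (if x l < 0 then -1 else 1))"
    using social_cost_step[of W x i 0] by simp
  also have "\<dots> = (\<Sum>l\<in>UNIV. W i l * (if x l < 1 then -1 else 1))"
    using assms by (intro sum.cong) (auto simp: order_less_le)
  also have "\<dots> = social_cost W x i 0 - social_cost W x i 1"
    using social_cost_step[of W x i 1] by simp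
  finally show ?thesis .
qed

lemma pareto_set_eq_singleton_above:
  assumes "row_stochastic W" "x i \<in> Ops" "\<theta> < x i"
    and "social_cost W x i (x i) < social_cost W x i (x i - 1)"
  shows "pareto_set Ops \<theta> W x i = {x i}"
proof (intro equalityI subsetI)
  fix z assume z: "z \<in> pareto_set Ops \<theta> W x i"
  show "z \<in> {x i}"
  proof (rule ccontr)
    assume "z \<notin> {x i}"
    with z assms(3) have "z \<le> x i - 1"
      unfolding pareto_set_def by auto
    from social_cost_le_max[OF assms(1) this, of "x i" x i] z assms(4) show False
      unfolding pareto_set_def by auto
  qed
qed (use assms(2) in \<open>simp add: pareto_set_def\<close>)

lemma pareto_set_eq_singleton_below:
  assumes "row_stochastic W" "x i \<in> Ops" "x i < \<theta>"
    and "social_cost W x i (x i) < social_cost W x i (x i + 1)"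
  shows "pareto_set Ops \<theta> W x i = {x i}"
proof (intro equalityI subsetI)
  fix z assume z: "z \<in> pareto_set Ops \<theta> W x i"
  show "z \<in> {x i}"
  proof (rule ccontr)
    assume "z \<notin> {x i}"
    with z assms(3) have "x i + 1 \<le> z"
      unfolding pareto_set_def by auto
    from social_cost_le_max[OF assms(1) _ this, of "x i" x i] z assms(4) show False
      unfolding pareto_set_def by auto
  qed
qed (use assms(2) in \<open>simp add: pareto_set_def\<close>)

lemma pareto_set_eq_singleton_at_target:
  assumes "x i \<in> Ops" "x i = \<theta>"
  shows "pareto_set Ops \<theta> W x i = {x i}"
  using assms unfolding pareto_set_def by auto

definition positives_settled :: "('v::finite \<Rightarrow> 'v \<Rightarrow> real) \<Rightarrow> ('v \<Rightarrow> int) \<Rightarrow> bool" where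
  "positives_settled W x \<longleftrightarrow> (\<forall>k. 0 < x k \<longrightarrow> social_cost W x k (x k) < social_cost W x k (x k - 1))"

definition negatives_settled :: "('v::finite \<Rightarrow> 'v \<Rightarrow> real) \<Rightarrow> ('v \<Rightarrow> int) \<Rightarrow> bool" where
  "negatives_settled W x \<longleftrightarrow> (\<forall>k. x k < 0 \<longrightarrow> social_cost W x k (x k) < social_cost W x k (x k + 1))"

lemma equilibrium_if_settled:
  assumes rs: "row_stochastic W" and x: "\<forall>i. x i \<in> Ops"
    and pos: "positives_settled W x" and neg: "negatives_settled W x"
  shows "equilibrium Ops 0 W x"
  unfolding equilibrium_def
proof
  fix i
  consider "0 < x i" | "x i < 0" | "x i = 0" by linarith
  then show "pareto_set Ops 0 W x i = {x i}"
  proof cases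
    case 1
    with pos show ?thesis
      by (intro pareto_set_eq_singleton_above[OF rs]) (auto simp: x positives_settled_def)
  next
    case 2
    with neg show ?thesis
      by (intro pareto_set_eq_singleton_below[OF rs]) (auto simp: x negatives_settled_def)
  next
    case 3
    show ?thesis by (rule pareto_set_eq_singleton_at_target[where x = x and i = i, OF x[rule_format] 3])
  qed
qed

lemma positives_settled_fun_upd:
  assumes "positives_settled W x" "x j \<le> 0" "c \<le> 0"
  shows "positives_settled W (x(j := c))"
  unfolding positives_settled_def
proof (intro allI impI)
  fix k assume k: "0 < (x(j := c)) k"
  with assms(3) have "k \<noteq> j" by auto
  with k assms show "social_cost W (x(j := c)) k ((x(j := c)) k) < social_cost W (x(j := c)) k ((x(j := c)) k - 1)"
    using social_cost_step_fun_upd[of x j "x k" c W k]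
    unfolding positives_settled_def by auto
qed

lemma minus_one_in_pareto_set:
  assumes rs: "row_stochastic W" and x: "\<forall>l. x l \<in> {a..b} \<and> x l \<noteq> 0"
    and "x j = 1" and cost: "social_cost W x j 0 \<le> social_cost W x j 1"
  shows "-1 \<in> pareto_set {a..b} 0 W x j"
proof -
  have "\<exists>l. x l < 0"
  proof (rule ccontr)
    assume "\<nexists>l. x l < 0"
    with x have "\<forall>l. 1 \<le> x l"
      by (metis int_one_le_iff_zero_less linorder_neqE_linordered_idom)
    from social_cost_step_if_all_ge[OF rs this, of j] cost show False by simp
  qed
  then obtain l where "x l < 0" by blast
  moreover have "a \<le> x l" using x by auto
  ultimately have "a \<le> -1" by linarith
  moreover have "social_cost W x j (-1) \<le> social_cost W x j 1"
    using social_cost_steps_across_zero[of x W j] x cost by simp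
  ultimately show ?thesis
    using assms(3) x[rule_format, of j] unfolding pareto_set_def by auto
qed

lemma legal_seq_to_positives_settled:
  assumes rs: "row_stochastic W" and "a \<le> 0" and "\<forall>i. x i \<in> {a..b} \<and> x i \<noteq> 0"
  shows "\<exists>seq. legal_seq {a..b} 0 W x seq \<and>
           (\<forall>i. run_seq x seq i \<in> {a..b} \<and> run_seq x seq i \<noteq> 0) \<and>
           positives_settled W (run_seq x seq)"
proof (rule legal_seq_descent[where f = "\<lambda>y. \<Sum>i\<in>UNIV. nat (y i - a)"])
  fix y assume y: "\<forall>i. y i \<in> {a..b} \<and> y i \<noteq> 0" and "\<not> positives_settled W y"
  then obtain j where j: "0 < y j" "social_cost W y j (y j - 1) \<le> social_cost W y j (y j)"
    by (auto simp: positives_settled_def not_less)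
  obtain z where z: "z \<in> pareto_set {a..b} 0 W y j" "z \<noteq> 0" "z < y j"
  proof (cases "y j = 1")
    case True
    with j minus_one_in_pareto_set[OF rs y] show thesis by (intro that[of "-1"]) auto
  next
    case False
    with j y[rule_format, of j] \<open>a \<le> 0\<close> show thesis
      by (intro that[of "y j - 1"]) (auto simp: pareto_set_def)
  qed
  have "nat (z - a) < nat (y j - a)"
    using z(3) j(1) \<open>a \<le> 0\<close> by linarith
  with z y show "\<exists>i z. z \<in> pareto_set {a..b} 0 W y i \<and> (\<forall>l. (y(i := z)) l \<in> {a..b} \<and> (y(i := z)) l \<noteq> 0) \<and>
      (\<Sum>l\<in>UNIV. nat ((y(i := z)) l - a)) < (\<Sum>l\<in>UNIV. nat (y l - a))"
    by (intro exI[of _ j] exI[of _ z] conjI sum_fun_upd_less[of "\<lambda>t. nat (t - a)"])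
      (auto simp: pareto_set_def)
qed (use assms in auto)

lemma step_up_keeps_all_negative:
  assumes rs: "row_stochastic W" and neg: "\<forall>i. x i < 0"
    and "social_cost W x j (x j + 1) \<le> social_cost W x j (x j)"
  shows "\<forall>i. (x(j := x j + 1)) i < 0"
proof -
  from social_cost_step_if_all_less[OF rs neg, of j] assms(3) have "x j \<noteq> -1" by auto
  with neg[rule_format, of j] have "x j + 1 < 0" by linarith
  with neg show ?thesis by simp
qed

lemma legal_seq_to_equilibrium:
  assumes rs: "row_stochastic W" and "0 \<le> b" and "\<forall>i. x i \<in> {a..b}"
    and "positives_settled W x" and "(\<exists>k. 0 < x k) \<or> (\<forall>i. x i < 0)"
  shows "\<exists>seq. legal_seq {a..b} 0 W x seq \<and> equilibrium {a..b} 0 W (run_seq x seq) \<and>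
           (\<exists>k. run_seq x seq k \<noteq> 0)"
proof -
  let ?P = "\<lambda>y. (\<forall>i. y i \<in> {a..b}) \<and> positives_settled W y \<and> ((\<exists>k. 0 < y k) \<or> (\<forall>i. y i < 0))"
  have "\<exists>seq. legal_seq {a..b} 0 W x seq \<and> ?P (run_seq x seq) \<and> negatives_settled W (run_seq x seq)"
  proof (rule legal_seq_descent[where f = "\<lambda>y. \<Sum>i\<in>UNIV. nat (b - y i)"])
    fix y assume y: "?P y" and "\<not> negatives_settled W y"
    then obtain j where j: "y j < 0" "social_cost W y j (y j + 1) \<le> social_cost W y j (y j)"
      by (auto simp: negatives_settled_def not_less)
    let ?y' = "y(j := y j + 1)"
    have "y j \<in> {a..b}" using y by blast
    with j \<open>0 \<le> b\<close> have pareto: "y j + 1 \<in> pareto_set {a..b} 0 W y j"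
      unfolding pareto_set_def by auto
    have invariant: "?P ?y'"
    proof (intro conjI)
      show "\<forall>i. ?y' i \<in> {a..b}"
        using y pareto unfolding pareto_set_def by auto
      show "positives_settled W ?y'"
        using y j by (intro positives_settled_fun_upd) auto
      show "(\<exists>k. 0 < ?y' k) \<or> (\<forall>i. ?y' i < 0)"
      proof (cases "\<exists>k. 0 < y k")
        case True
        then obtain k where "0 < y k" by blast
        moreover from this j(1) have "k \<noteq> j" by auto
        ultimately show ?thesis by auto
      next
        case False
        with y have "\<forall>i. y i < 0" by blast
        with step_up_keeps_all_negative[OF rs _ j(2)] show ?thesis by blast
      qed
    qed
    have "nat (b - (y j + 1)) < nat (b - y j)"
      using j(1) \<open>0 \<le> b\<close> by linarith
    then show "\<exists>i z. z \<in> pareto_set {a..b} 0 W y i \<and> ?P (y(i := z)) \<and>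
        (\<Sum>l\<in>UNIV. nat (b - (y(i := z)) l)) < (\<Sum>l\<in>UNIV. nat (b - y l))"
      using pareto invariant sum_fun_upd_less[of "\<lambda>t. nat (b - t)"] by blast
  qed (use assms in auto)
  then obtain seq where seq: "legal_seq {a..b} 0 W x seq" "?P (run_seq x seq)"
    "negatives_settled W (run_seq x seq)"
    by blast
  from seq(2) have "\<exists>k. run_seq x seq k \<noteq> 0" by (metis less_irrefl)
  with seq show ?thesis using equilibrium_if_settled[OF rs] by blast
qed

theorem theorem4:
  fixes W :: "'v::finite \<Rightarrow> 'v \<Rightarrow> real" and a b :: int and x0 :: "'v \<Rightarrow> int"
  assumes "row_stochastic W"
    and "a \<le> 0" and "0 \<le> b"
    and "\<forall>i. x0 i \<in> {a..b}"
    and "\<forall>i. x0 i \<noteq> 0"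
  shows "\<exists>seq. legal_seq {a..b} 0 W x0 seq \<and>
           ((\<exists>z. z \<noteq> 0 \<and> (\<forall>i. run_seq x0 seq i = z)) \<or>
            (equilibrium {a..b} 0 W (run_seq x0 seq) \<and> \<not> is_consensus (run_seq x0 seq)))"
proof -
  obtain s1 where s1: "legal_seq {a..b} 0 W x0 s1"
    "\<forall>i. run_seq x0 s1 i \<in> {a..b} \<and> run_seq x0 s1 i \<noteq> 0" "positives_settled W (run_seq x0 s1)"
    using legal_seq_to_positives_settled[of W a x0 b] assms by blast
  then have "(\<exists>k. 0 < run_seq x0 s1 k) \<or> (\<forall>i. run_seq x0 s1 i < 0)"
    by (meson linorder_neqE_linordered_idom)
  with s1 obtain s2 where s2: "legal_seq {a..b} 0 W (run_seq x0 s1) s2"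
    "equilibrium {a..b} 0 W (run_seq x0 (s1 @ s2))" "\<exists>k. run_seq x0 (s1 @ s2) k \<noteq> 0"
    using legal_seq_to_equilibrium[of W b "run_seq x0 s1" a] assms
    unfolding run_seq_append by blast
  have "legal_seq {a..b} 0 W x0 (s1 @ s2)"
    using s1(1) s2(1) by (simp add: legal_seq_append)
  with s2(2,3) show ?thesis
    unfolding is_consensus_def by metis
qed

end
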